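(* Let $r\ge 2$ be real, let $q$ be an $r$-mighty prime, and let $p_m$ be a prime with $p_m>q^2$. Let $n\in\mathbb{S}$ satisfy $$\sigma_{-r}(q)<\sigma_{-r}(n)<\sigma_{-r}(qp_m).$$ Then $q\mid n$ (i.e. $v_q(n)\ge1$), and $q$ is the smallest prime $p$ with $v_p(n)>0$.
   Context: $p_m$ denotes the $m$-th prime. A Steinitz number is a formal product $n=\prod_p p^{\alpha_p}$ over all primes with $\alpha_p\in\mathbb{Z}_{\ge0}\cup\{\infty\}$; $v_p(n)=\alpha_p$; $\mathbb{S}$ is the set of Steinitz numbers. For real $r>1$, $\sigma_{-r}$ is defined on $\mathbb{S}$ multiplicatively with $\sigma_{-r}(p^\alpha)=\sum_{i=0}^\alpha p^{-ri}$ for finite $\alpha$ and $\sigma_{-r}(p^\infty)=\frac1{1-p^{-r}}$ (on $\mathbb{N}$ this is $\sum_{d\mid n}d^{-r}$). Let $u_m(r)=\prod_{t=m+1}^\infty\frac1{1-p_t^{-r}}$. A prime $p_m$ is $r$-mighty if $1+p_m^{-r}>u_m(r)$. *)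

theory Defs
  imports Complex_Main "HOL-Computational_Algebra.Primes" "HOL-Library.Extended_Nat"
begin

text \<open>A Steinitz number is represented by its exponent function: for each prime p,
  the value at p is v_p(n) in N extended by infinity. Values at non-primes are ignored.\<close>
type_synonym steinitz = "nat \<Rightarrow> enat"

definition steinitz_of_nat :: "nat \<Rightarrow> steinitz" where
  "steinitz_of_nat n = (\<lambda>p. enat (multiplicity p n))"

definition sigma_loc :: "real \<Rightarrow> nat \<Rightarrow> enat \<Rightarrow> real" where
  "sigma_loc r p a = (case a of
      enat k \<Rightarrow> (\<Sum>i\<le>k. real p powr (- r * real i))
    | \<infinity> \<Rightarrow> 1 / (1 - real p powr (- r)))"

definition sigma_neg :: "real \<Rightarrow> steinitz \<Rightarrow> real" where
  "sigma_neg r n = lim (\<lambda>N. \<Prod>p\<in>{p. prime p \<and> p \<le> N}. sigma_loc r p (n p))"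

definition u_tail :: "real \<Rightarrow> nat \<Rightarrow> real" where
  "u_tail r q = lim (\<lambda>N. \<Prod>p\<in>{p. prime p \<and> q < p \<and> p \<le> N}. 1 / (1 - real p powr (- r)))"

definition mighty :: "real \<Rightarrow> nat \<Rightarrow> bool" where
  "mighty r q \<longleftrightarrow> prime q \<and> 1 + real q powr (- r) > u_tail r q"

end

theory Submission
  imports Defs "HOL-Analysis.Summation_Tests"
begin

text \<open>
  Each local factor of sigma_{-r}(n) lies between 1 and 1/(1 - p^{-r}), so the partial
  Euler products increase to sigma_{-r}(n) and every single factor bounds it from below.
  If a prime p < q occurred in n, then sigma_{-r}(n) \<ge> 1 + p^{-r}, which for r \<ge> 2 and
  p_m > q^2 exceeds (1 + q^{-r})(1 + p_m^{-r}) = sigma_{-r}(q p_m). If moreover q did not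
  occur, only primes above q would remain, so sigma_{-r}(n) \<le> u_m(r) < 1 + q^{-r} = sigma_{-r}(q)
  by mightiness of q.
\<close>

definition euler_partial_prod :: "(nat \<Rightarrow> real) \<Rightarrow> nat \<Rightarrow> real" where
  "euler_partial_prod f N = (\<Prod>p\<in>{p. prime p \<and> p \<le> N}. f p)"

lemma finite_primes_le: "finite {p::nat. prime p \<and> p \<le> N}"
  by (rule finite_subset[of _ "{..N}"]) auto

lemma prime_powr_neg_less_1:
  assumes "prime (p::nat)" "r > 0"
  shows "real p powr -r < 1"
  using powr_less_mono[of "-r" 0 "real p"] assms prime_gt_1_nat by simp

lemma prime_powr_neg_le_half:
  assumes "prime (p::nat)" "r \<ge> 1"
  shows "real p powr -r \<le> 1 / 2"
proof -
  have p: "real p \<ge> 2" using assms(1) prime_ge_2_nat by auto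
  have "real p powr -r \<le> 2 powr -r" using p assms(2) by (intro powr_mono2') auto
  also have "\<dots> \<le> 2 powr -1" using assms(2) by (intro powr_mono) auto
  finally show ?thesis by (simp add: powr_minus)
qed

lemma sigma_loc_enat:
  assumes "prime (p::nat)"
  shows "sigma_loc r p (enat k) = (\<Sum>i\<le>k. (real p powr -r) ^ i)"
proof -
  have "(real p powr -r) ^ i = real p powr (-r * real i)" for i
  proof -
    have "(real p powr -r) ^ i = (real p powr -r) powr real i"
      using assms prime_gt_0_nat by (simp add: powr_realpow)
    then show ?thesis by (simp add: powr_powr)
  qed
  then show ?thesis by (simp add: sigma_loc_def)
qed

lemma sigma_loc_0 [simp]: "prime (p::nat) \<Longrightarrow> sigma_loc r p 0 = 1"
  by (simp add: sigma_loc_def zero_enat_def prime_gt_0_nat)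

lemma sigma_loc_bounds:
  assumes "prime (p::nat)" "r > 0"
  shows "1 \<le> sigma_loc r p a" and "sigma_loc r p a \<le> 1 / (1 - real p powr -r)"
    and "a > 0 \<Longrightarrow> 1 + real p powr -r \<le> sigma_loc r p a"
proof -
  define x where "x = real p powr -r"
  have x: "0 < x" "x < 1"
    using prime_powr_neg_less_1[OF assms] prime_gt_0_nat[OF assms(1)] by (auto simp: x_def)
  have "1 \<le> sigma_loc r p a \<and> sigma_loc r p a \<le> 1 / (1 - x) \<and> (a > 0 \<longrightarrow> 1 + x \<le> sigma_loc r p a)"
  proof (cases a)
    case (enat k)
    then have sigma: "sigma_loc r p a = (\<Sum>i\<le>k. x ^ i)"
      using sigma_loc_enat[OF assms(1)] by (simp add: x_def)
    have "(\<Sum>i\<in>{0}. x ^ i) \<le> (\<Sum>i\<le>k. x ^ i)"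
      using x by (intro sum_mono2) auto
    moreover have "a > 0 \<Longrightarrow> (\<Sum>i\<in>{0, 1}. x ^ i) \<le> (\<Sum>i\<le>k. x ^ i)"
      using x enat by (intro sum_mono2) (auto simp: zero_enat_def)
    moreover have "(\<Sum>i\<le>k. x ^ i) \<le> 1 / (1 - x)"
      using geometric_sum_less[of x "{..k}"] x by simp
    ultimately show ?thesis by (simp add: sigma)
  next
    case infinity
    have "(1 + x) * (1 - x) \<le> 1" by (simp add: algebra_simps)
    then show ?thesis using x infinity by (simp add: sigma_loc_def x_def field_simps)
  qed
  then show "1 \<le> sigma_loc r p a" "sigma_loc r p a \<le> 1 / (1 - real p powr -r)"
    "a > 0 \<Longrightarrow> 1 + real p powr -r \<le> sigma_loc r p a"
    by (auto simp: x_def)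
qed

lemma incseq_euler_partial_prod:
  assumes "\<And>p. prime p \<Longrightarrow> 1 \<le> f p"
  shows "incseq (euler_partial_prod f)"
proof (rule incseq_SucI)
  fix N
  show "euler_partial_prod f N \<le> euler_partial_prod f (Suc N)"
  proof (cases "prime (Suc N)")
    case True
    then have "{p. prime p \<and> p \<le> Suc N} = insert (Suc N) {p. prime p \<and> p \<le> N}" by auto
    moreover have "0 \<le> euler_partial_prod f N"
      unfolding euler_partial_prod_def using assms
      by (intro prod_nonneg) (auto intro: order.trans[OF zero_le_one])
    ultimately show ?thesis
      using assms[OF True] by (simp add: euler_partial_prod_def finite_primes_le mult_le_cancel_right1)
  next
    case False
    then have "{p. prime p \<and> p \<le> Suc N} = {p. prime p \<and> p \<le> N}" by (auto simp: le_Suc_eq)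
    then show ?thesis by (simp add: euler_partial_prod_def)
  qed
qed

lemma euler_partial_prod_ge_factor:
  assumes "\<And>p. prime p \<Longrightarrow> 1 \<le> f p" "prime p" "p \<le> N"
  shows "f p \<le> euler_partial_prod f N"
proof -
  have "euler_partial_prod f N = f p * (\<Prod>p'\<in>{p. prime p \<and> p \<le> N} - {p}. f p')"
    unfolding euler_partial_prod_def using assms(2,3) by (intro prod.remove) (auto simp: finite_primes_le)
  moreover have "1 \<le> (\<Prod>p'\<in>{p. prime p \<and> p \<le> N} - {p}. f p')"
    using assms(1) by (intro prod_ge_1) auto
  moreover have "0 \<le> f p" using assms(1,2) by (auto intro: order.trans[OF zero_le_one])
  ultimately show ?thesis by (simp add: mult_le_cancel_left1)
qed

lemma euler_partial_prod_bounded: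
  assumes "r > 1" and f: "\<And>p. prime p \<Longrightarrow> 1 \<le> f p \<and> f p \<le> 1 / (1 - real p powr -r)"
  shows "euler_partial_prod f N \<le> exp (2 * (\<Sum>n. real n powr -r))"
proof -
  have "euler_partial_prod f N \<le> (\<Prod>p\<in>{p. prime p \<and> p \<le> N}. exp (2 * real p powr -r))"
    unfolding euler_partial_prod_def
  proof (intro prod_mono conjI)
    fix p assume "p \<in> {p. prime p \<and> p \<le> N}"
    then have p: "prime p" by simp
    define x where "x = real p powr -r"
    have x: "0 < x" "x \<le> 1/2"
      using prime_powr_neg_le_half[OF p] prime_gt_0_nat[OF p] \<open>r > 1\<close> by (auto simp: x_def)
    have "1 \<le> (1 + 2 * x) * (1 - x)" using x by (simp add: algebra_simps power2_eq_square)
    then have "1 / (1 - x) \<le> 1 + 2 * x" using x by (simp add: field_simps)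
    also have "\<dots> \<le> exp (2 * x)" by (rule exp_ge_add_one_self)
    finally show "0 \<le> f p" "f p \<le> exp (2 * real p powr -r)" using f[OF p] by (auto simp: x_def)
  qed
  also have "\<dots> = exp (2 * (\<Sum>p\<in>{p. prime p \<and> p \<le> N}. real p powr -r))"
    by (simp add: exp_sum finite_primes_le sum_distrib_left)
  also have "\<dots> \<le> exp (2 * (\<Sum>n. real n powr -r))"
    using \<open>r > 1\<close> by (simp add: sum_le_suminf summable_real_powr_iff finite_primes_le)
  finally show ?thesis .
qed

lemma euler_partial_prod_LIMSEQ:
  assumes "r > 1" and "\<And>p. prime p \<Longrightarrow> 1 \<le> f p \<and> f p \<le> 1 / (1 - real p powr -r)"
  shows "euler_partial_prod f \<longlonglongrightarrow> lim (euler_partial_prod f)"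
    and "euler_partial_prod f N \<le> lim (euler_partial_prod f)"
proof -
  have inc: "incseq (euler_partial_prod f)"
    using assms(2) by (intro incseq_euler_partial_prod) auto
  obtain L where "euler_partial_prod f \<longlonglongrightarrow> L"
    using incseq_convergent[OF inc] euler_partial_prod_bounded[OF assms] by blast
  then show lim: "euler_partial_prod f \<longlonglongrightarrow> lim (euler_partial_prod f)"
    by (simp add: limI)
  show "euler_partial_prod f N \<le> lim (euler_partial_prod f)"
    by (rule incseq_le[OF inc lim])
qed

lemma sigma_neg_eq_lim:
  "sigma_neg r n = lim (euler_partial_prod (\<lambda>p. sigma_loc r p (n p)))"
  by (simp add: sigma_neg_def euler_partial_prod_def [abs_def])

lemma sigma_neg_ge_sigma_loc:
  assumes "r > 1" "prime p"
  shows "sigma_loc r p (n p) \<le> sigma_neg r n"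
proof -
  have bounds: "\<And>p. prime p \<Longrightarrow>
      1 \<le> sigma_loc r p (n p) \<and> sigma_loc r p (n p) \<le> 1 / (1 - real p powr -r)"
    using sigma_loc_bounds \<open>r > 1\<close> by simp
  have "sigma_loc r p (n p) \<le> euler_partial_prod (\<lambda>p. sigma_loc r p (n p)) p"
    using bounds assms(2) by (intro euler_partial_prod_ge_factor) auto
  also have "\<dots> \<le> sigma_neg r n"
    unfolding sigma_neg_eq_lim by (rule euler_partial_prod_LIMSEQ(2)[OF \<open>r > 1\<close> bounds])
  finally show ?thesis .
qed

lemma sigma_neg_le_u_tail:
  assumes "r > 1" and "\<And>p. prime p \<Longrightarrow> p \<le> q \<Longrightarrow> n p = 0"
  shows "sigma_neg r n \<le> u_tail r q"
proof -
  define f where "f = (\<lambda>p. sigma_loc r p (n p))"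
  define g where "g p = (if q < p then 1 / (1 - real p powr -r) else 1)" for p
  have f: "\<And>p. prime p \<Longrightarrow> 1 \<le> f p \<and> f p \<le> 1 / (1 - real p powr -r)"
    using sigma_loc_bounds \<open>r > 1\<close> by (simp add: f_def)
  have g: "\<And>p. prime p \<Longrightarrow> 1 \<le> g p \<and> g p \<le> 1 / (1 - real p powr -r)"
    using sigma_loc_bounds[of _ r \<infinity>] \<open>r > 1\<close> by (simp add: g_def sigma_loc_def)
  have "f p \<le> g p" if "prime p" for p
    using f[OF that] assms(2)[OF that] that by (cases "q < p") (auto simp: f_def g_def)
  then have "euler_partial_prod f N \<le> euler_partial_prod g N" for N
    unfolding euler_partial_prod_def using f
    by (intro prod_mono) (auto intro: order.trans[OF zero_le_one])
  then have "lim (euler_partial_prod f) \<le> lim (euler_partial_prod g)"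
    by (intro LIMSEQ_le[OF euler_partial_prod_LIMSEQ(1)[OF \<open>r > 1\<close> f]
          euler_partial_prod_LIMSEQ(1)[OF \<open>r > 1\<close> g]]) auto
  moreover have "u_tail r q = lim (euler_partial_prod g)"
  proof -
    have "{p. prime p \<and> q < p \<and> p \<le> N} = {p \<in> {p. prime p \<and> p \<le> N}. q < p}" for N by auto
    then show ?thesis
      unfolding u_tail_def euler_partial_prod_def g_def
      by (simp add: prod.inter_filter[OF finite_primes_le] del: mem_Collect_eq)
  qed
  ultimately show ?thesis by (simp add: sigma_neg_eq_lim f_def)
qed

lemma sigma_neg_steinitz_of_nat:
  assumes "n > 0"
  shows "sigma_neg r (steinitz_of_nat n) =
    (\<Prod>p\<in>prime_factors n. sigma_loc r p (enat (multiplicity p n)))"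
proof -
  have "euler_partial_prod (\<lambda>p. sigma_loc r p (steinitz_of_nat n p)) N
          = (\<Prod>p\<in>prime_factors n. sigma_loc r p (enat (multiplicity p n)))" if "n \<le> N" for N
  proof -
    have "prime_factors n \<subseteq> {p. prime p \<and> p \<le> N}"
      using assms that by (auto simp: in_prime_factors_iff intro: order.trans[OF dvd_imp_le])
    moreover have "sigma_loc r p (enat (multiplicity p n)) = 1" if "prime p" "p \<notin> prime_factors n" for p
      using that assms by (simp add: in_prime_factors_iff not_dvd_imp_multiplicity_0 zero_enat_def [symmetric])
    ultimately show ?thesis unfolding euler_partial_prod_def steinitz_of_nat_def
      by (intro prod.mono_neutral_right finite_primes_le) auto
  qed
  then have "euler_partial_prod (\<lambda>p. sigma_loc r p (steinitz_of_nat n p))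
          \<longlonglongrightarrow> (\<Prod>p\<in>prime_factors n. sigma_loc r p (enat (multiplicity p n)))"
    by (intro tendsto_eventually eventually_sequentiallyI)
  then show ?thesis by (simp add: sigma_neg_eq_lim limI)
qed

lemma sigma_neg_prime:
  assumes "prime q"
  shows "sigma_neg r (steinitz_of_nat q) = 1 + real q powr -r"
  using assms by (simp add: sigma_neg_steinitz_of_nat prime_gt_0_nat prime_prime_factors
      multiplicity_self sigma_loc_def)

lemma sigma_neg_prime_mult_prime:
  assumes "prime q" "prime p" "q \<noteq> p"
  shows "sigma_neg r (steinitz_of_nat (q * p)) = (1 + real q powr -r) * (1 + real p powr -r)"
proof -
  have "prime_factors (q * p) = {q, p}"
    using assms by (simp add: prime_factors_product prime_prime_factors prime_gt_0_nat insert_commute)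
  moreover have "multiplicity q (q * p) = 1" "multiplicity p (q * p) = 1"
    using assms by (simp_all add: prime_elem_multiplicity_mult_distrib prime_gt_0_nat
        multiplicity_self prime_multiplicity_other)
  ultimately show ?thesis
    using assms by (simp add: sigma_neg_steinitz_of_nat prime_gt_0_nat sigma_loc_def)
qed

lemma one_add_powr_mult_less:
  fixes p q m r :: real
  assumes r: "r \<ge> 2" and p: "0 < p" "p \<le> q - 1" and m: "q\<^sup>2 < m"
  shows "(1 + q powr -r) * (1 + m powr -r) < 1 + p powr -r"
proof -
  have q: "q > 1" using p by linarith
  define y where "y = q powr -r"
  have y_pos: "0 < y" using q by (simp add: y_def)
  have z_less: "m powr -r < y\<^sup>2"
  proof -
    have "m powr -r < (q\<^sup>2) powr -r"
      using r q m by (intro powr_less_mono2_neg) auto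
    then show ?thesis using q by (simp add: y_def power2_eq_square powr_mult)
  qed
  have "y \<le> q powr -2" unfolding y_def using r q by (intro powr_mono) auto
  then have y_le: "y \<le> 1 / q\<^sup>2" using q by (simp add: powr_minus powr_numeral divide_inverse)
  have "y * (1 + y) \<le> 2 / q\<^sup>2"
  proof -
    have "1 / q\<^sup>2 \<le> 1" using q by (simp add: field_simps one_le_power)
    then have "y * y \<le> y" using y_le y_pos by (simp add: mult_left_le)
    then show ?thesis using y_le by (simp add: algebra_simps)
  qed
  also have "\<dots> \<le> 1 / (q - 1)"
  proof -
    have "2 * (q - 1) \<le> q\<^sup>2" using zero_le_power2[of "q - 1"] by (simp add: power2_eq_square algebra_simps)
    then show ?thesis using q by (simp add: field_simps)
  qed
  finally have y_bound: "y * (1 + y) \<le> 1 / (q - 1)" .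
  have "y * (q / (q - 1)) \<le> y * (q / (q - 1)) powr r"
  proof -
    have "(q / (q - 1)) powr 1 \<le> (q / (q - 1)) powr r" using r q by (intro powr_mono) auto
    then show ?thesis using q y_pos by (simp flip: times_divide_eq_right)
  qed
  also have "\<dots> = (q - 1) powr -r"
    using q by (simp add: y_def powr_divide powr_minus field_simps)
  also have "\<dots> \<le> p powr -r" using r p by (intro powr_mono2') auto
  finally have x_bound: "y * (q / (q - 1)) \<le> p powr -r" .
  have "(1 + y) * m powr -r < (1 + y) * y\<^sup>2"
    using z_less y_pos by (intro mult_strict_left_mono) auto
  then have "(1 + y) * (1 + m powr -r) < 1 + y + y\<^sup>2 * (1 + y)"
    by (simp add: algebra_simps)
  also have "\<dots> \<le> 1 + y + y / (q - 1)"
    using mult_left_mono[OF y_bound, of y] y_pos by (simp add: power2_eq_square algebra_simps)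
  also have "\<dots> = 1 + y * (q / (q - 1))" using q by (simp add: field_simps)
  finally show ?thesis using x_bound by (simp add: y_def)
qed

theorem mainTheorem5:
  fixes r :: real and q pm :: nat and n :: steinitz
  assumes "r \<ge> 2"
    and "mighty r q"
    and "prime pm" and "pm > q ^ 2"
    and "sigma_neg r (steinitz_of_nat q) < sigma_neg r n"
    and "sigma_neg r n < sigma_neg r (steinitz_of_nat (q * pm))"
  shows "n q \<ge> 1 \<and> (\<forall>p. prime p \<and> n p > 0 \<longrightarrow> q \<le> p)"
proof -
  have r: "r > 1" using assms(1) by simp
  have q: "prime q" and mighty: "u_tail r q < 1 + real q powr -r"
    using assms(2) by (auto simp: mighty_def)
  have "q \<noteq> pm" using assms(4) prime_gt_1_nat[OF q] by (auto simp: power2_eq_square)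
  then have sigma_q_pm:
      "sigma_neg r (steinitz_of_nat (q * pm)) = (1 + real q powr -r) * (1 + real pm powr -r)"
    by (rule sigma_neg_prime_mult_prime[OF q assms(3)])
  have smallest: "q \<le> p" if p: "prime p" "n p > 0" for p
  proof (rule ccontr)
    assume "\<not> q \<le> p"
    then have "real p \<le> real q - 1" by simp
    have "1 + real p powr -r \<le> sigma_neg r n"
      using sigma_loc_bounds(3)[OF p(1), of r "n p"] sigma_neg_ge_sigma_loc[OF r p(1), of n] p r
      by linarith
    also have "\<dots> < (1 + real q powr -r) * (1 + real pm powr -r)" using assms(6) sigma_q_pm by simp
    also have "\<dots> < 1 + real p powr -r"
      using one_add_powr_mult_less[OF assms(1)] \<open>real p \<le> real q - 1\<close> assms(4) prime_gt_0_nat[OF p(1)]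
      by (simp flip: of_nat_power)
    finally have "1 + real p powr -r < 1 + real p powr -r" .
    then show False by simp
  qed
  have "n q \<ge> 1"
  proof (rule ccontr)
    assume "\<not> n q \<ge> 1"
    then have "n p = 0" if "prime p" "p \<le> q" for p
      using smallest[OF that(1)] that(2) ileI1[of 0 "n q"] by (cases "p = q") (auto simp: one_eSuc)
    then have "sigma_neg r n \<le> u_tail r q" by (intro sigma_neg_le_u_tail[OF r])
    with mighty assms(5) show False by (simp add: sigma_neg_prime[OF q])
  qed
  with smallest show ?thesis by blast
qed

end
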